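(* Let $\Psi$ be a bialgebra endomorphism of ${\cal H}_R$. Then there exists a unique family $(P_t)_{t\in CT}$ of primitive elements of ${\cal H}_R$ such that $\Psi=\Phi_{(P_t)}$.
   Context: ${\cal H}_R$ is the commutative polynomial algebra over $\mathbb{Q}$ on the set $CT$ of isomorphism classes of rooted trees (finite connected simply connected graphs with a root, edges oriented away from the root; weight = number of vertices); monomials are forests. It is a bialgebra with coproduct the algebra morphism $\Delta(t)=1\otimes t+t\otimes1+\sum_CP^C(t)\otimes R^C(t)$, the sum over admissible cuts $C$ of $t$ (nonempty sets of edges meeting each root-to-vertex path at most once; after removing them, $R^C(t)$ is the component containing the root and $P^C(t)$ the product of the others), and counit $\varepsilon(1)=1$, $\varepsilon(t)=0$. Primitive: $\Delta(x)=x\otimes1+1\otimes x$. $l_1$ is the one-vertex tree. For forests $M,N$: $M\top N=0$ if $N=1$, else $\frac{1}{weight(N)}\sum_vN_v$, $v$ over vertices of $N$, $N_v$ obtained from $N$ by attaching every tree of $M$ to $v$; bilinear extension. For a family $(P_t)_{t\in CT}$ of primitive elements, $\Phi_{(P_t)}$ is the algebra endomorphism of ${\cal H}_R$ defined by induction on the weight of trees by $\Phi_{(P_t)}(l_1)=P_{l_1}$ and, for $T\in CT$, $\Phi_{(P_t)}(T)=\sum_{C}\Phi_{(P_t)}(P^C(T))\top P_{R^C(T)}+P_T$, the sum over admissible cuts $C$ of $T$ (it is a bialgebra endomorphism). *)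

theory Defs
  imports Complex_Main "HOL-Library.Multiset" "HOL-Library.Poly_Mapping" "HOL-Library.Product_Plus"
begin

text \<open>An (isomorphism class of a) rooted tree is a root together with the
multiset of the subtrees hanging from its children.  A forest is a multiset of
trees; the empty forest is the unit monomial 1.\<close>

datatype tree = Node "tree multiset"

type_synonym forest = "tree multiset"

definition l1 :: tree where "l1 = Node {#}"

primrec weight :: "tree \<Rightarrow> nat" where
  "weight (Node M) = Suc (sum_mset (image_mset weight M))"

definition fweight :: "forest \<Rightarrow> nat" where
  "fweight F = sum_mset (image_mset weight F)"

text \<open>H_R = commutative polynomial algebra over Q on the trees: finitely supported
rational coefficient functions on monomials (= forests), with convolution product.
H_R \<otimes> H_R is realised as finitely supported functions on pairs of forests,
with the componentwise product (F\<otimes>G)(F'\<otimes>G') = FF'\<otimes>GG'.\<close>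

type_synonym H = "forest \<Rightarrow>\<^sub>0 rat"
type_synonym H2 = "(forest \<times> forest) \<Rightarrow>\<^sub>0 rat"

definition mono :: "forest \<Rightarrow> H" where "mono F = Poly_Mapping.single F 1"

definition treeH :: "tree \<Rightarrow> H" where "treeH t = mono {#t#}"

definition scal :: "rat \<Rightarrow> ('a::monoid_add \<Rightarrow>\<^sub>0 rat) \<Rightarrow> ('a \<Rightarrow>\<^sub>0 rat)" where
  "scal c x = Poly_Mapping.single 0 c * x"

definition lext :: "('a \<Rightarrow> ('b::monoid_add \<Rightarrow>\<^sub>0 rat)) \<Rightarrow> ('a \<Rightarrow>\<^sub>0 rat) \<Rightarrow> ('b \<Rightarrow>\<^sub>0 rat)" where
  "lext f x = (\<Sum>F\<in>Poly_Mapping.keys x. scal (Poly_Mapping.lookup x F) (f F))"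

definition tens :: "H \<Rightarrow> H \<Rightarrow> H2" where
  "tens a b = (\<Sum>F\<in>Poly_Mapping.keys a. \<Sum>G\<in>Poly_Mapping.keys b. Poly_Mapping.single (F, G) (Poly_Mapping.lookup a F * Poly_Mapping.lookup b G))"

definition tmap :: "(H \<Rightarrow> H) \<Rightarrow> (H \<Rightarrow> H) \<Rightarrow> H2 \<Rightarrow> H2" where
  "tmap f g z = lext (\<lambda>(F, G). tens (f (mono F)) (g (mono G))) z"

text \<open>For a tree t, cuts t is the multiset (with multiplicity, i.e. indexed by
cuts) of pairs (P^C(t), R^C(t)) for all admissible cuts C of t, INCLUDING the
empty cut (which gives (1, t)).  It is computed recursively: for each child c of
the root one either cuts the edge to c (c goes entirely into the pruned part), or
keeps that edge and chooses an (arbitrary, possibly empty) admissible cut of c.\<close>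

definition child_opts :: "tree \<Rightarrow> (forest \<times> tree) multiset \<Rightarrow> (forest \<times> forest) multiset" where
  "child_opts c cs = add_mset ({#c#}, {#}) (image_mset (\<lambda>(p, r). (p, {#r#})) cs)"

definition pairprod :: "(forest \<times> forest) multiset \<Rightarrow> (forest \<times> forest) multiset \<Rightarrow> (forest \<times> forest) multiset" where
  "pairprod A B = sum_mset (image_mset (\<lambda>a. image_mset (\<lambda>b. (fst a + fst b, snd a + snd b)) B) A)"

definition combine :: "(forest \<times> forest) multiset multiset \<Rightarrow> (forest \<times> forest) multiset" where
  "combine Ms = fold_mset pairprod {#({#}, {#})#} Ms"

primrec cuts_aux :: "tree \<Rightarrow> tree \<times> (forest \<times> tree) multiset" where
  "cuts_aux (Node M) = (Node M,
     image_mset (\<lambda>(p, rs). (p, Node rs))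
       (combine (image_mset (\<lambda>(c, cs). child_opts c cs) (image_mset cuts_aux M))))"

definition cuts :: "tree \<Rightarrow> (forest \<times> tree) multiset" where
  "cuts t = snd (cuts_aux t)"

text \<open>nonempty admissible cuts: exactly those whose pruned part is not 1\<close>
definition ncuts :: "tree \<Rightarrow> (forest \<times> tree) multiset" where
  "ncuts t = filter_mset (\<lambda>(p, r). p \<noteq> {#}) (cuts t)"

definition DeltaT :: "tree \<Rightarrow> H2" where
  "DeltaT t = Poly_Mapping.single ({#}, {#t#}) 1 + Poly_Mapping.single ({#t#}, {#}) 1
     + sum_mset (image_mset (\<lambda>(p, r). Poly_Mapping.single (p, {#r#}) 1) (ncuts t))"

definition Delta :: "H \<Rightarrow> H2" where
  "Delta x = lext (\<lambda>F. prod_mset (image_mset DeltaT F)) x"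

definition eps :: "H \<Rightarrow> rat" where
  "eps x = Poly_Mapping.lookup x {#}"

definition primitive :: "H \<Rightarrow> bool" where
  "primitive x \<longleftrightarrow> Delta x = tens x 1 + tens 1 x"

definition bialg_endo :: "(H \<Rightarrow> H) \<Rightarrow> bool" where
  "bialg_endo \<Psi> \<longleftrightarrow>
     (\<forall>x y. \<Psi> (x + y) = \<Psi> x + \<Psi> y) \<and> (\<forall>c x. \<Psi> (scal c x) = scal c (\<Psi> x)) \<and>
     \<Psi> 1 = 1 \<and> (\<forall>x y. \<Psi> (x * y) = \<Psi> x * \<Psi> y) \<and>
     (\<forall>x. Delta (\<Psi> x) = tmap \<Psi> \<Psi> (Delta x)) \<and>
     (\<forall>x. eps (\<Psi> x) = eps x)"

text \<open>graft M t: multiset (indexed by the vertices v of t) of the trees obtained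
from t by attaching every tree of M to v.\<close>

primrec graft_aux :: "forest \<Rightarrow> tree \<Rightarrow> tree \<times> tree multiset" where
  "graft_aux M (Node C) = (Node C,
     add_mset (Node (C + M))
       (sum_mset (image_mset (\<lambda>(c, gs). image_mset (\<lambda>c'. Node (C - {#c#} + {#c'#})) gs)
          (image_mset (graft_aux M) C))))"

definition graft :: "forest \<Rightarrow> tree \<Rightarrow> tree multiset" where
  "graft M t = snd (graft_aux M t)"

definition graftF :: "forest \<Rightarrow> forest \<Rightarrow> forest multiset" where
  "graftF M N = sum_mset (image_mset (\<lambda>t. image_mset (\<lambda>t'. N - {#t#} + {#t'#}) (graft M t)) N)"

definition topF :: "forest \<Rightarrow> forest \<Rightarrow> H" where
  "topF M N = (if N = {#} then 0
     else scal (1 / of_nat (fweight N)) (sum_mset (image_mset mono (graftF M N))))"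

definition top :: "H \<Rightarrow> H \<Rightarrow> H" where
  "top x y = (\<Sum>M\<in>Poly_Mapping.keys x. \<Sum>N\<in>Poly_Mapping.keys y. scal (Poly_Mapping.lookup x M * Poly_Mapping.lookup y N) (topF M N))"

text \<open>Phi on trees, by well-founded recursion on the weight (all trees of the
pruned parts P^C(T) have smaller weight than T, so the recursion is genuine).\<close>

definition phiT :: "(tree \<Rightarrow> H) \<Rightarrow> tree \<Rightarrow> H" where
  "phiT P = wfrec (measure weight)
     (\<lambda>rec T. sum_mset (image_mset (\<lambda>(p, r). top (prod_mset (image_mset rec p)) (P r)) (ncuts T))
              + P T)"

definition Phi :: "(tree \<Rightarrow> H) \<Rightarrow> H \<Rightarrow> H" where
  "Phi P = lext (\<lambda>F. prod_mset (image_mset (phiT P) F))"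

end

theory Submission
  imports Defs
begin

text \<open>If \<open>\<Psi> = \<Phi>\<^bsub>(P\<^sub>t)\<^esub>\<close>, the definition of \<open>\<Phi>\<close> on a tree \<open>T\<close> can be solved for \<open>P\<^sub>T\<close>:
  \<open>P\<^sub>T = \<Psi>(T) - \<Sum>\<^sub>C \<Psi>(P\<^sup>C T) \<top> P\<^bsub>R\<^sup>C T\<^esub>\<close>, summed over the nonempty admissible
  cuts, is a recursion on the weight.  This gives uniqueness; conversely, the family it
  defines satisfies \<open>\<Phi>\<^bsub>(P\<^sub>t)\<^esub> = \<Psi>\<close>, as both sides are algebra morphisms agreeing
  on trees.  Primitivity of \<open>P\<^sub>T\<close> follows by induction on the weight from two facts:
  for primitive \<open>q\<close>, \<open>\<Delta>(x \<top> q) = (x \<top> q) \<otimes> 1 + \<Sum> x' \<otimes> (x'' \<top> q)\<close> where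
  \<open>\<Delta> x = \<Sum> x' \<otimes> x''\<close>; and coassociativity of \<open>\<Delta>\<close>, applied to
  \<open>\<Psi>(T) = \<Sum>\<^sub>C \<Psi>(P\<^sup>C T) \<top> P\<^bsub>R\<^sup>C T\<^esub>\<close> (the empty cut now included), \<open>\<Psi>\<close> being a
  coalgebra morphism.  Both facts are proved combinatorially, on multisets of pairs of
  forests, and then transported to \<open>H\<^sub>R\<close> by linearity.\<close>

section \<open>Linear algebra on finitely supported coefficient functions\<close>

lemma lookup_scal [simp]: "Poly_Mapping.lookup (scal c x) k = c * Poly_Mapping.lookup x k"
  unfolding scal_def by (simp flip: mult_map_scale_conv_mult add: map.rep_eq when_def)

lemma scal_0 [simp]: "scal 0 x = 0"
  by (rule poly_mapping_eqI) simp

lemma scal_zero [simp]: "scal c 0 = 0"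
  by (rule poly_mapping_eqI) simp

lemma scal_1 [simp]: "scal 1 x = x"
  by (rule poly_mapping_eqI) simp

lemma scal_add_right: "scal c (x + y) = scal c x + scal c y"
  by (rule poly_mapping_eqI) (simp add: lookup_add algebra_simps)

lemma scal_add_left: "scal (c + d) x = scal c x + scal d x"
  by (rule poly_mapping_eqI) (simp add: lookup_add algebra_simps)

lemma scal_scal [simp]: "scal c (scal d x) = scal (c * d) x"
  by (rule poly_mapping_eqI) simp

lemma scal_single [simp]: "scal c (Poly_Mapping.single k d) = Poly_Mapping.single k (c * d)"
  by (rule poly_mapping_eqI) (simp add: lookup_single when_def)

lemma scal_sum: "scal c (sum f I) = (\<Sum>i\<in>I. scal c (f i))"
  by (rule poly_mapping_eqI) (simp add: lookup_sum sum_distrib_left)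

lemma scal_sum_mset: "scal c (\<Sum>i\<in>#X. f i) = (\<Sum>i\<in>#X. scal c (f i))"
  by (induction X) (simp_all add: scal_add_right)

lemma lookup_sum_mset:
  "Poly_Mapping.lookup (\<Sum>i\<in>#X. f i) k = (\<Sum>i\<in>#X. Poly_Mapping.lookup (f i) k)"
  by (induction X) (simp_all add: lookup_add)

lemma lext_superset:
  assumes "finite S" "Poly_Mapping.keys x \<subseteq> S"
  shows "lext f x = (\<Sum>F\<in>S. scal (Poly_Mapping.lookup x F) (f F))"
  unfolding lext_def using assms
  by (intro sum.mono_neutral_left) (auto simp: in_keys_iff)

lemma lext_zero [simp]: "lext f 0 = 0"
  by (simp add: lext_def)

lemma lext_add: "lext f (x + y) = lext f x + lext f y"
proof -
  have S: "finite (Poly_Mapping.keys x \<union> Poly_Mapping.keys y)" by simp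
  show ?thesis
    by (simp add: lext_superset[OF S keys_add] lext_superset[OF S, of x] lext_superset[OF S, of y]
        lookup_add scal_add_left sum.distrib)
qed

lemma lext_scal: "lext f (scal c x) = scal c (lext f x)"
proof -
  have keys: "Poly_Mapping.keys (scal c x) \<subseteq> Poly_Mapping.keys x"
    by (auto simp: in_keys_iff)
  show ?thesis
    unfolding lext_superset[OF finite_keys keys] by (simp add: lext_def scal_sum)
qed

lemma lext_diff: "lext f (x - y) = lext f x - lext f y"
  using lext_add[of f "x - y" y] by (simp add: algebra_simps)

lemma lext_single [simp]: "lext f (Poly_Mapping.single k c) = scal c (f k)"
  by (cases "c = 0") (simp_all add: lext_def)

lemma lext_sum: "lext f (sum g I) = (\<Sum>i\<in>I. lext f (g i))"
  by (induction I rule: infinite_finite_induct) (simp_all add: lext_add)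

lemma lext_sum_mset: "lext f (\<Sum>i\<in>#X. g i) = (\<Sum>i\<in>#X. lext f (g i))"
  by (induction X) (simp_all add: lext_add)

lemma lext_cong: "(\<And>F. F \<in> Poly_Mapping.keys x \<Longrightarrow> f F = g F) \<Longrightarrow> lext f x = lext g x"
  by (simp add: lext_def)

lemma lookup_lext:
  "Poly_Mapping.lookup (lext f x) k =
     (\<Sum>F\<in>Poly_Mapping.keys x. Poly_Mapping.lookup x F * Poly_Mapping.lookup (f F) k)"
  by (simp add: lext_def lookup_sum)

lemma lext_single_basis: "lext (\<lambda>F. Poly_Mapping.single F 1) x = x"
proof (rule poly_mapping_eqI)
  fix k
  have "Poly_Mapping.lookup (lext (\<lambda>F. Poly_Mapping.single F 1) x) k =
      (\<Sum>F\<in>Poly_Mapping.keys x. if F = k then Poly_Mapping.lookup x F else 0)"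
    unfolding lookup_lext by (intro sum.cong) (auto simp: lookup_single when_def)
  also have "\<dots> = Poly_Mapping.lookup x k"
    by (simp add: sum.delta' in_keys_iff)
  finally show "Poly_Mapping.lookup (lext (\<lambda>F. Poly_Mapping.single F 1) x) k = Poly_Mapping.lookup x k" .
qed

lemma lext_add_fun: "lext (\<lambda>F. f F + g F) x = lext f x + lext g x"
  by (simp add: lext_def scal_add_right sum.distrib)

lemma lext_sum_mset_fun: "lext (\<lambda>F. \<Sum>i\<in>#X. f i F) x = (\<Sum>i\<in>#X. lext (f i) x)"
  by (induction X) (simp_all add: lext_add_fun lext_def)

lemma lext_lext: "lext g (lext f x) = lext (\<lambda>F. lext g (f F)) x"
  by (simp add: lext_def[of f] lext_sum lext_scal) (simp add: lext_def)

definition linear_map :: "(('a::monoid_add \<Rightarrow>\<^sub>0 rat) \<Rightarrow> ('b::monoid_add \<Rightarrow>\<^sub>0 rat)) \<Rightarrow> bool" where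
  "linear_map L \<longleftrightarrow> (\<forall>x y. L (x + y) = L x + L y) \<and> (\<forall>c x. L (scal c x) = scal c (L x))"

lemma linear_map_sum: "linear_map L \<Longrightarrow> L (sum g I) = (\<Sum>i\<in>I. L (g i))"
  unfolding linear_map_def
  by (induction I rule: infinite_finite_induct) (metis scal_0 sum.infinite, metis scal_0 sum.empty, simp)

lemma linear_map_eq_lext:
  assumes "linear_map L"
  shows "L x = lext (\<lambda>F. L (Poly_Mapping.single F 1)) x"
proof -
  have "L x = L (lext (\<lambda>F. Poly_Mapping.single F 1) x)"
    by (simp add: lext_single_basis)
  also have "\<dots> = (\<Sum>F\<in>Poly_Mapping.keys x. L (scal (Poly_Mapping.lookup x F) (Poly_Mapping.single F 1)))"
    unfolding lext_def by (rule linear_map_sum[OF assms])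
  also have "\<dots> = lext (\<lambda>F. L (Poly_Mapping.single F 1)) x"
    using assms unfolding linear_map_def lext_def
    by (metis (no_types, lifting) mult.right_neutral scal_single sum.cong)
  finally show ?thesis .
qed

definition pm_of_mset :: "'a multiset \<Rightarrow> ('a \<Rightarrow>\<^sub>0 rat)" where
  "pm_of_mset X = (\<Sum>x\<in>#X. Poly_Mapping.single x 1)"

lemma pm_of_mset_empty [simp]: "pm_of_mset {#} = 0"
  by (simp add: pm_of_mset_def)

lemma pm_of_mset_add_mset [simp]:
  "pm_of_mset (add_mset x X) = Poly_Mapping.single x 1 + pm_of_mset X"
  by (simp add: pm_of_mset_def)

lemma pm_of_mset_union [simp]: "pm_of_mset (X + Y) = pm_of_mset X + pm_of_mset Y"
  by (simp add: pm_of_mset_def)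

lemma lookup_pm_of_mset: "Poly_Mapping.lookup (pm_of_mset X) k = of_nat (count X k)"
  by (induction X) (auto simp: lookup_add lookup_single when_def)

lemma pm_of_mset_inject: "pm_of_mset X = pm_of_mset Y \<Longrightarrow> X = Y"
  by (metis lookup_pm_of_mset multiset_eqI of_nat_eq_iff)

lemma lext_pm_of_mset: "lext f (pm_of_mset X) = (\<Sum>x\<in>#X. f x)"
  by (simp add: pm_of_mset_def lext_sum_mset)

lemma pm_of_mset_sum_mset: "pm_of_mset (\<Sum>i\<in>#Xs. f i) = (\<Sum>i\<in>#Xs. pm_of_mset (f i))"
  by (induction Xs) auto

lemma pm_of_mset_image: "pm_of_mset (image_mset f X) = (\<Sum>x\<in>#X. Poly_Mapping.single (f x) 1)"
  by (simp add: pm_of_mset_def multiset.map_comp o_def)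

lemma pm_of_mset_replicate: "pm_of_mset (replicate_mset n x) = Poly_Mapping.single x (of_nat n)"
  by (induction n) (simp_all add: single_add[symmetric] add.commute)

lemma lookup_tens:
  "Poly_Mapping.lookup (tens a b) (F, G) = Poly_Mapping.lookup a F * Poly_Mapping.lookup b G"
proof -
  have "Poly_Mapping.lookup (tens a b) (F, G) = (\<Sum>F'\<in>Poly_Mapping.keys a. \<Sum>G'\<in>Poly_Mapping.keys b.
      (if F' = F \<and> G' = G then Poly_Mapping.lookup a F' * Poly_Mapping.lookup b G' else 0))"
    by (simp add: tens_def lookup_sum lookup_single when_def)
  also have "\<dots> = (\<Sum>F'\<in>Poly_Mapping.keys a. if F' = F then (if G \<in> Poly_Mapping.keys b then
       Poly_Mapping.lookup a F' * Poly_Mapping.lookup b G else 0) else 0)"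
    by (intro sum.cong refl) (auto simp: sum.delta' intro: sum.neutral)
  also have "\<dots> = Poly_Mapping.lookup a F * Poly_Mapping.lookup b G"
    by (auto simp: sum.delta' in_keys_iff)
  finally show ?thesis .
qed

lemma tens_add_left: "tens (a + a') b = tens a b + tens a' b"
  by (rule poly_mapping_eqI) (auto simp: lookup_tens lookup_add algebra_simps)

lemma tens_add_right: "tens a (b + b') = tens a b + tens a b'"
  by (rule poly_mapping_eqI) (auto simp: lookup_tens lookup_add algebra_simps)

lemma tens_diff_left: "tens (a - a') b = tens a b - tens a' b"
  by (rule poly_mapping_eqI) (auto simp: lookup_tens lookup_minus algebra_simps)

lemma tens_scal_left: "tens (scal c a) b = scal c (tens a b)"
  by (rule poly_mapping_eqI) (auto simp: lookup_tens algebra_simps)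

lemma tens_scal_right: "tens a (scal c b) = scal c (tens a b)"
  by (rule poly_mapping_eqI) (auto simp: lookup_tens algebra_simps)

lemma tens_zero_left [simp]: "tens 0 b = 0"
  by (rule poly_mapping_eqI) (auto simp: lookup_tens)

lemma tens_zero_right [simp]: "tens a 0 = 0"
  by (rule poly_mapping_eqI) (auto simp: lookup_tens)

lemma tens_single:
  "tens (Poly_Mapping.single F c) (Poly_Mapping.single G d) = Poly_Mapping.single (F, G) (c * d)"
  by (rule poly_mapping_eqI, rename_tac k, case_tac k) (simp add: lookup_tens lookup_single when_def)

lemma tens_sum_left: "tens (sum f I) b = (\<Sum>i\<in>I. tens (f i) b)"
  by (induction I rule: infinite_finite_induct) (simp_all add: tens_add_left)

lemma tens_sum_right: "tens a (sum f I) = (\<Sum>i\<in>I. tens a (f i))"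
  by (induction I rule: infinite_finite_induct) (simp_all add: tens_add_right)

lemma tens_sum_mset_left: "tens (\<Sum>i\<in>#X. f i) b = (\<Sum>i\<in>#X. tens (f i) b)"
  by (induction X) (simp_all add: tens_add_left)

lemma tens_sum_mset_right: "tens a (\<Sum>i\<in>#X. f i) = (\<Sum>i\<in>#X. tens a (f i))"
  by (induction X) (simp_all add: tens_add_right)

lemma tens_lext_left: "tens (lext f x) b = lext (\<lambda>F. tens (f F) b) x"
  by (simp add: lext_def tens_sum_left tens_scal_left)

lemma tens_lext_right: "tens a (lext f x) = lext (\<lambda>F. tens a (f F)) x"
  by (simp add: lext_def tens_sum_right tens_scal_right)

lemma lext_tens: "lext h (tens a b) = lext (\<lambda>F. lext (\<lambda>G. h (F, G)) b) a"
proof -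
  have "lext h (tens a b) = (\<Sum>F\<in>Poly_Mapping.keys a. \<Sum>G\<in>Poly_Mapping.keys b.
          scal (Poly_Mapping.lookup a F * Poly_Mapping.lookup b G) (h (F, G)))"
    by (simp add: tens_def lext_sum)
  also have "\<dots> = lext (\<lambda>F. lext (\<lambda>G. h (F, G)) b) a"
    by (simp add: lext_def scal_sum mult.commute)
  finally show ?thesis .
qed

lemma tens_pm_of_mset_mono: "tens (pm_of_mset X) (mono G) = pm_of_mset (image_mset (\<lambda>F. (F, G)) X)"
  by (induction X) (simp_all add: tens_add_left tens_single mono_def)

lemma tens_mono_pm_of_mset: "tens (mono G) (pm_of_mset X) = pm_of_mset (image_mset (\<lambda>F. (G, F)) X)"
  by (induction X) (simp_all add: tens_add_right tens_single mono_def)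

section \<open>Convolution of multisets in a commutative monoid\<close>

definition mset_conv :: "'a::comm_monoid_add multiset \<Rightarrow> 'a multiset \<Rightarrow> 'a multiset" where
  "mset_conv A B = (\<Sum>a\<in>#A. image_mset (\<lambda>b. a + b) B)"

lemma image_sum_mset: "image_mset f (\<Sum>x\<in>#X. g x) = (\<Sum>x\<in>#X. image_mset f (g x))"
  by (induction X) auto

lemma sum_mset_sum_mset: "(\<Sum>y\<in>#(\<Sum>x\<in>#X. g x). f y) = (\<Sum>x\<in>#X. \<Sum>y\<in>#g x. f y)"
  by (induction X) auto

lemma replicate_mset_add: "replicate_mset (m + n) x = replicate_mset m x + replicate_mset n x"
  by (induction m) auto

lemma diff_single_add_left:
  assumes "t \<in># N"
  shows "N + N' - {#t#} + X = N - {#t#} + X + N'"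
proof -
  obtain N0 where "N = add_mset t N0"
    using assms by (metis mset_add)
  then show ?thesis
    by (simp add: add_ac)
qed

lemma diff_single_add_right:
  assumes "t \<in># N'"
  shows "N + N' - {#t#} + X = N + (N' - {#t#} + X)"
proof -
  obtain N0 where "N' = add_mset t N0"
    using assms by (metis mset_add)
  then show ?thesis
    by (simp add: add_ac)
qed

lemma sum_mset_add_mset_distrib:
  "(\<Sum>x\<in>#X. add_mset (f x) (g x)) = image_mset f X + (\<Sum>x\<in>#X. g x)"
  by (induction X) auto

lemma mset_conv_empty_left [simp]: "mset_conv {#} B = {#}"
  by (simp add: mset_conv_def)

lemma mset_conv_empty_right [simp]: "mset_conv A {#} = {#}"
  by (simp add: mset_conv_def)

lemma mset_conv_add_mset_left: "mset_conv (add_mset a A) B = image_mset (\<lambda>b. a + b) B + mset_conv A B"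
  by (simp add: mset_conv_def)

lemma mset_conv_union_left: "mset_conv (A + A') B = mset_conv A B + mset_conv A' B"
  by (simp add: mset_conv_def)

lemma mset_conv_add_mset_right: "mset_conv A (add_mset b B) = image_mset (\<lambda>a. a + b) A + mset_conv A B"
  by (induction A) (simp_all add: mset_conv_add_mset_left)

lemma mset_conv_union_right: "mset_conv A (B + B') = mset_conv A B + mset_conv A B'"
  by (induction A) (simp_all add: mset_conv_add_mset_left)

lemma mset_conv_single_left: "mset_conv {#a#} B = image_mset (\<lambda>b. a + b) B"
  by (simp add: mset_conv_add_mset_left)

lemma mset_conv_single_right: "mset_conv A {#b#} = image_mset (\<lambda>a. a + b) A"
  by (simp add: mset_conv_add_mset_right)

lemma mset_conv_zero_left [simp]: "mset_conv {#0#} B = B"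
  by (simp add: mset_conv_single_left)

lemma mset_conv_zero_right [simp]: "mset_conv A {#0#} = A"
  by (simp add: mset_conv_single_right)

lemma mset_conv_single_single [simp]: "mset_conv {#a#} {#b#} = {#a + b#}"
  by (simp add: mset_conv_single_left)

lemma mset_conv_sum_left: "mset_conv (\<Sum>i\<in>#X. f i) B = (\<Sum>i\<in>#X. mset_conv (f i) B)"
  by (induction X) (simp_all add: mset_conv_union_left)

lemma mset_conv_sum_right: "mset_conv A (\<Sum>i\<in>#X. f i) = (\<Sum>i\<in>#X. mset_conv A (f i))"
  by (induction X) (simp_all add: mset_conv_union_right)

lemma pm_of_mset_conv: "pm_of_mset (mset_conv A B) = pm_of_mset A * pm_of_mset B"
proof (induction A)
  case empty
  then show ?case by (simp add: mset_conv_def)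
next
  case (add a A)
  have "pm_of_mset (image_mset (\<lambda>b. a + b) B) = Poly_Mapping.single a 1 * pm_of_mset B"
    by (induction B) (simp_all add: distrib_left mult_single)
  then show ?case
    using add by (simp add: mset_conv_add_mset_left distrib_right)
qed

lemma mset_conv_commute: "mset_conv A B = mset_conv B A"
  by (rule pm_of_mset_inject) (simp add: pm_of_mset_conv mult.commute)

lemma mset_conv_assoc: "mset_conv (mset_conv A B) C = mset_conv A (mset_conv B C)"
  by (rule pm_of_mset_inject) (simp add: pm_of_mset_conv mult.assoc)

lemma mset_conv_left_commute: "mset_conv A (mset_conv B C) = mset_conv B (mset_conv A C)"
  by (metis mset_conv_assoc mset_conv_commute)

lemma comp_fun_commute_mset_conv: "comp_fun_commute (mset_conv :: ('a::comm_monoid_add) multiset \<Rightarrow> _)"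
  by unfold_locales (auto simp: fun_eq_iff mset_conv_left_commute)

lemma image_mset_conv:
  assumes "\<And>a b. h (a + b) = ga a + gb b"
  shows "image_mset h (mset_conv A B) = mset_conv (image_mset ga A) (image_mset gb B)"
  by (simp add: mset_conv_def image_sum_mset multiset.map_comp o_def assms)

lemma sum_mset_over_conv: "(\<Sum>x\<in>#mset_conv A B. f x) = (\<Sum>a\<in>#A. \<Sum>b\<in>#B. f (a + b))"
  unfolding mset_conv_def sum_mset_sum_mset by (simp add: multiset.map_comp o_def)

lemma sum_mset_over_conv_multiplicative:
  assumes "\<And>a b. a \<in># A \<Longrightarrow> b \<in># B \<Longrightarrow> f (a + b) = mset_conv (f a) (f b)"
  shows "(\<Sum>x\<in>#mset_conv A B. f x) = mset_conv (\<Sum>a\<in>#A. f a) (\<Sum>b\<in>#B. f b)"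
proof -
  have "(\<Sum>x\<in>#mset_conv A B. f x) = (\<Sum>a\<in>#A. \<Sum>b\<in>#B. mset_conv (f a) (f b))"
    unfolding sum_mset_over_conv using assms
    by (intro arg_cong[where f=sum_mset] image_mset_cong) auto
  also have "\<dots> = (\<Sum>a\<in>#A. mset_conv (f a) (\<Sum>b\<in>#B. f b))"
    by (simp only: mset_conv_sum_right)
  finally show ?thesis
    by (simp only: mset_conv_sum_left)
qed

lemma sum_mset_over_conv_derivation:
  assumes "\<And>a b. a \<in># A \<Longrightarrow> b \<in># B \<Longrightarrow>
    f (a + b) = mset_conv (f a) {#b#} + mset_conv {#a#} (f b)"
  shows "(\<Sum>x\<in>#mset_conv A B. f x) = mset_conv (\<Sum>a\<in>#A. f a) B + mset_conv A (\<Sum>b\<in>#B. f b)"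
proof -
  have "(\<Sum>x\<in>#mset_conv A B. f x) =
      (\<Sum>a\<in>#A. \<Sum>b\<in>#B. mset_conv (f a) {#b#} + mset_conv {#a#} (f b))"
    unfolding sum_mset_over_conv using assms
    by (intro arg_cong[where f=sum_mset] image_mset_cong) auto
  also have "\<dots> = (\<Sum>a\<in>#A. mset_conv (f a) (\<Sum>b\<in>#B. {#b#})) +
      (\<Sum>a\<in>#A. mset_conv {#a#} (\<Sum>b\<in>#B. f b))"
    by (simp only: sum_mset.distrib mset_conv_sum_right)
  also have "\<dots> = mset_conv (\<Sum>a\<in>#A. f a) B + mset_conv A (\<Sum>b\<in>#B. f b)"
    by (simp add: mset_conv_sum_left[symmetric])
  finally show ?thesis .
qed

lemma in_mset_convE:
  assumes "x \<in># mset_conv A B"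
  obtains a b where "a \<in># A" "b \<in># B" "x = a + b"
  using assms unfolding mset_conv_def by auto

lemma filter_mset_conv:
  assumes "\<And>a b. P (a + b) \<longleftrightarrow> P a \<and> P b"
  shows "filter_mset P (mset_conv A B) = mset_conv (filter_mset P A) (filter_mset P B)"
  by (induction A) (simp_all add: mset_conv_add_mset_left filter_mset_image_mset assms)

section \<open>Admissible cuts and the terms of the coproduct\<close>

text \<open>\<^term>\<open>tree_coprod_terms t\<close> lists the terms \<open>A \<otimes> B\<close> of \<open>\<Delta> t\<close>: the term \<open>t \<otimes> 1\<close> and
  \<open>P\<^sup>C(t) \<otimes> R\<^sup>C(t)\<close> for every admissible cut \<open>C\<close>, the empty one included.\<close>

definition tree_coprod_terms :: "tree \<Rightarrow> (forest \<times> forest) multiset" where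
  "tree_coprod_terms t = child_opts t (cuts t)"

definition coprod_terms :: "forest \<Rightarrow> (forest \<times> forest) multiset" where
  "coprod_terms F = combine (image_mset tree_coprod_terms F)"

lemma pairprod_eq_mset_conv: "pairprod = mset_conv"
  by (intro ext) (simp add: pairprod_def mset_conv_def plus_prod_def)

lemma coprod_terms_empty [simp]: "coprod_terms {#} = {#0#}"
  by (simp add: coprod_terms_def combine_def zero_prod_def)

lemma coprod_terms_add_mset:
  "coprod_terms (add_mset t F) = mset_conv (tree_coprod_terms t) (coprod_terms F)"
  by (simp add: coprod_terms_def combine_def pairprod_eq_mset_conv
      comp_fun_commute.fold_mset_add_mset[OF comp_fun_commute_mset_conv])

lemma coprod_terms_union: "coprod_terms (F + G) = mset_conv (coprod_terms F) (coprod_terms G)"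
  by (induction F) (simp_all add: coprod_terms_add_mset mset_conv_assoc)

lemma coprod_terms_single [simp]: "coprod_terms {#t#} = tree_coprod_terms t"
  by (simp add: coprod_terms_add_mset)

lemma fst_cuts_aux [simp]: "fst (cuts_aux t) = t"
  by (cases t) simp

lemma cuts_Node: "cuts (Node M) = image_mset (\<lambda>(p, rs). (p, Node rs)) (coprod_terms M)"
proof -
  have "image_mset (\<lambda>(c, cs). child_opts c cs) (image_mset cuts_aux M) = image_mset tree_coprod_terms M"
    by (simp add: multiset.map_comp o_def tree_coprod_terms_def[abs_def] cuts_def[symmetric] case_prod_beta)
  then show ?thesis
    by (simp add: cuts_def coprod_terms_def)
qed

lemma cuts_Node': "cuts (Node M) = image_mset (\<lambda>w. (fst w, Node (snd w))) (coprod_terms M)"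
  by (simp add: cuts_Node case_prod_beta')

lemma tree_coprod_terms_eq:
  "tree_coprod_terms t = add_mset ({#t#}, {#}) (image_mset (\<lambda>w. (fst w, {#snd w#})) (cuts t))"
  by (simp add: tree_coprod_terms_def child_opts_def case_prod_beta')

lemma sum_mset_tree_coprod_terms:
  "(\<Sum>x\<in>#tree_coprod_terms t. f x) = f ({#t#}, {#}) + (\<Sum>x\<in>#cuts t. f (fst x, {#snd x#}))"
  by (simp add: tree_coprod_terms_eq multiset.map_comp o_def)

lemma image_tree_coprod_terms:
  "image_mset f (tree_coprod_terms t) =
     add_mset (f ({#t#}, {#})) (image_mset (\<lambda>x. f (fst x, {#snd x#})) (cuts t))"
  by (simp add: tree_coprod_terms_eq multiset.map_comp o_def)

lemma fweight_empty [simp]: "fweight {#} = 0"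
  by (simp add: fweight_def)

lemma fweight_add_mset [simp]: "fweight (add_mset t F) = weight t + fweight F"
  by (simp add: fweight_def)

lemma fweight_union [simp]: "fweight (F + G) = fweight F + fweight G"
  by (simp add: fweight_def)

lemma weight_Node: "weight (Node M) = Suc (fweight M)"
  by (simp add: fweight_def)

lemma weight_pos: "0 < weight t"
  by (cases t) simp

lemma fweight_eq_0_iff [simp]: "fweight F = 0 \<longleftrightarrow> F = {#}"
  by (induction F) (auto simp: weight_pos dest: gr0_implies_Suc)

lemma weight_le_fweight: "t \<in># F \<Longrightarrow> weight t \<le> fweight F"
  by (induction F) auto

lemma coprod_terms_weight_from_cuts:
  assumes "\<And>t p r. t \<in># F \<Longrightarrow> (p, r) \<in># cuts t \<Longrightarrow> fweight p + weight r = weight t"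
    and "x \<in># coprod_terms F"
  shows "fweight (fst x) + fweight (snd x) = fweight F"
  using assms
proof (induction F arbitrary: x)
  case empty
  then show ?case by (simp add: zero_prod_def)
next
  case (add t F)
  from add.prems(2) obtain a b where ab: "a \<in># tree_coprod_terms t" "b \<in># coprod_terms F" "x = a + b"
    by (auto simp: coprod_terms_add_mset elim: in_mset_convE)
  have "fweight (fst b) + fweight (snd b) = fweight F"
    using add.IH[of b] add.prems(1) ab(2) by auto
  moreover have "fweight (fst a) + fweight (snd a) = weight t"
    using ab(1) add.prems(1) by (auto simp: tree_coprod_terms_eq)
  ultimately show ?case
    using ab(3) by (simp add: plus_prod_def)
qed

lemma cuts_weight: "(p, r) \<in># cuts t \<Longrightarrow> fweight p + weight r = weight t"
proof (induction t arbitrary: p r)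
  case (Node M)
  from Node.prems obtain rs where "(p, rs) \<in># coprod_terms M" "r = Node rs"
    by (auto simp: cuts_Node)
  moreover have "fweight p + fweight rs = fweight M"
    using coprod_terms_weight_from_cuts[of M "(p, rs)"] Node.IH calculation(1) by auto
  ultimately show ?case
    by (simp add: weight_Node del: weight.simps)
qed

lemma coprod_terms_weight: "(a, b) \<in># coprod_terms F \<Longrightarrow> fweight a + fweight b = fweight F"
  using coprod_terms_weight_from_cuts[OF cuts_weight] by fastforce

lemma ncuts_weight:
  assumes "(p, r) \<in># ncuts t"
  shows "weight r < weight t" "\<And>s. s \<in># p \<Longrightarrow> weight s < weight t"
proof -
  have pr: "(p, r) \<in># cuts t" "p \<noteq> {#}"
    using assms by (auto simp: ncuts_def)
  have w: "fweight p + weight r = weight t"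
    by (rule cuts_weight[OF pr(1)])
  have "0 < fweight p"
    using pr(2) by (metis fweight_eq_0_iff gr0I)
  then show "weight r < weight t"
    using w by simp
  fix s
  assume "s \<in># p"
  then have "weight s \<le> fweight p"
    by (rule weight_le_fweight)
  then show "weight s < weight t"
    using w weight_pos[of r] by simp
qed

lemma coprod_terms_empty_left_from_cuts:
  assumes "\<And>t. t \<in># F \<Longrightarrow> filter_mset (\<lambda>x. fst x = {#}) (cuts t) = {#({#}, t)#}"
  shows "filter_mset (\<lambda>x. fst x = {#}) (coprod_terms F) = {#({#}, F)#}"
  using assms
proof (induction F)
  case empty
  then show ?case by (simp add: zero_prod_def)
next
  case (add t F)
  have "filter_mset (\<lambda>x. fst x = {#}) (tree_coprod_terms t) =
      image_mset (\<lambda>w. (fst w, {#snd w#})) (filter_mset (\<lambda>x. fst x = {#}) (cuts t))"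
    by (simp add: tree_coprod_terms_eq filter_mset_image_mset)
  then have "filter_mset (\<lambda>x. fst x = {#}) (tree_coprod_terms t) = {#({#}, {#t#})#}"
    using add.prems by simp
  then show ?case
    using add by (simp add: coprod_terms_add_mset filter_mset_conv plus_prod_def)
qed

lemma cuts_empty_left: "filter_mset (\<lambda>x. fst x = {#}) (cuts t) = {#({#}, t)#}"
proof (induction t)
  case (Node M)
  have "filter_mset (\<lambda>x. fst x = {#}) (cuts (Node M)) =
      image_mset (\<lambda>w. (fst w, Node (snd w))) (filter_mset (\<lambda>x. fst x = {#}) (coprod_terms M))"
    by (simp add: cuts_Node' filter_mset_image_mset)
  also have "\<dots> = {#({#}, Node M)#}"
    using coprod_terms_empty_left_from_cuts[of M] Node.IH by simp
  finally show ?case .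
qed

lemma cuts_ncuts: "cuts t = add_mset ({#}, t) (ncuts t)"
proof -
  have "cuts t = filter_mset (\<lambda>x. fst x = {#}) (cuts t) + filter_mset (\<lambda>x. \<not> fst x = {#}) (cuts t)"
    by (rule multiset_partition)
  also have "filter_mset (\<lambda>x. \<not> fst x = {#}) (cuts t) = ncuts t"
    unfolding ncuts_def by (rule filter_mset_cong) auto
  finally show ?thesis
    by (simp add: cuts_empty_left)
qed

text \<open>The terms of \<open>(\<Delta> \<otimes> id) \<Delta> F\<close> and of \<open>(id \<otimes> \<Delta>) \<Delta> F\<close>.\<close>

definition coprod_on_left :: "forest \<times> forest \<Rightarrow> (forest \<times> forest \<times> forest) multiset" where
  "coprod_on_left x = image_mset (\<lambda>y. (fst y, snd y, snd x)) (coprod_terms (fst x))"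

definition coprod_on_right :: "forest \<times> forest \<Rightarrow> (forest \<times> forest \<times> forest) multiset" where
  "coprod_on_right x = image_mset (\<lambda>y. (fst x, fst y, snd y)) (coprod_terms (snd x))"

definition coprod_left_terms :: "forest \<Rightarrow> (forest \<times> forest \<times> forest) multiset" where
  "coprod_left_terms F = (\<Sum>x\<in>#coprod_terms F. coprod_on_left x)"

definition coprod_right_terms :: "forest \<Rightarrow> (forest \<times> forest \<times> forest) multiset" where
  "coprod_right_terms F = (\<Sum>x\<in>#coprod_terms F. coprod_on_right x)"

lemma coprod_on_left_add: "coprod_on_left (x + x') = mset_conv (coprod_on_left x) (coprod_on_left x')"
  unfolding coprod_on_left_def
  by (simp add: plus_prod_def coprod_terms_union
      image_mset_conv[where ga="\<lambda>y. (fst y, snd y, snd x)" and gb="\<lambda>y. (fst y, snd y, snd x')"])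

lemma coprod_on_right_add: "coprod_on_right (x + x') = mset_conv (coprod_on_right x) (coprod_on_right x')"
  unfolding coprod_on_right_def
  by (simp add: plus_prod_def coprod_terms_union
      image_mset_conv[where ga="\<lambda>y. (fst x, fst y, snd y)" and gb="\<lambda>y. (fst x', fst y, snd y)"])

lemma coprod_left_terms_union:
  "coprod_left_terms (F + G) = mset_conv (coprod_left_terms F) (coprod_left_terms G)"
  unfolding coprod_left_terms_def coprod_terms_union
  by (rule sum_mset_over_conv_multiplicative) (rule coprod_on_left_add)

lemma coprod_right_terms_union:
  "coprod_right_terms (F + G) = mset_conv (coprod_right_terms F) (coprod_right_terms G)"
  unfolding coprod_right_terms_def coprod_terms_union
  by (rule sum_mset_over_conv_multiplicative) (rule coprod_on_right_add)

lemma coprod_coassoc_from_trees: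
  assumes "\<And>t. t \<in># F \<Longrightarrow> coprod_left_terms {#t#} = coprod_right_terms {#t#}"
  shows "coprod_left_terms F = coprod_right_terms F"
  using assms
proof (induction F)
  case empty
  then show ?case
    by (simp add: coprod_left_terms_def coprod_right_terms_def coprod_on_left_def
        coprod_on_right_def zero_prod_def)
next
  case (add t F)
  then show ?case
    using coprod_left_terms_union[of "{#t#}" F] coprod_right_terms_union[of "{#t#}" F] by simp
qed

lemma cuts_coassoc_Node:
  assumes "coprod_left_terms M = coprod_right_terms M"
  shows "(\<Sum>x\<in>#cuts (Node M). image_mset (\<lambda>y. (fst y, snd y, snd x)) (coprod_terms (fst x))) =
    (\<Sum>x\<in>#cuts (Node M). image_mset (\<lambda>z. (fst x, fst z, snd z)) (cuts (snd x)))"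
proof -
  let ?h = "\<lambda>w :: forest \<times> forest \<times> forest. (fst w, fst (snd w), Node (snd (snd w)))"
  have "(\<Sum>x\<in>#cuts (Node M). image_mset (\<lambda>y. (fst y, snd y, snd x)) (coprod_terms (fst x))) =
      image_mset ?h (coprod_left_terms M)"
    by (simp add: cuts_Node coprod_left_terms_def coprod_on_left_def image_sum_mset
        multiset.map_comp o_def case_prod_beta)
  moreover have "(\<Sum>x\<in>#cuts (Node M). image_mset (\<lambda>z. (fst x, fst z, snd z)) (cuts (snd x))) =
      image_mset ?h (coprod_right_terms M)"
    by (simp add: cuts_Node coprod_right_terms_def coprod_on_right_def image_sum_mset
        multiset.map_comp o_def case_prod_beta)
  ultimately show ?thesis
    using assms by simp
qed

lemma coprod_coassoc_singleton:
  assumes "(\<Sum>x\<in>#cuts t. image_mset (\<lambda>y. (fst y, snd y, snd x)) (coprod_terms (fst x))) =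
    (\<Sum>x\<in>#cuts t. image_mset (\<lambda>z. (fst x, fst z, snd z)) (cuts (snd x)))"
  shows "coprod_left_terms {#t#} = coprod_right_terms {#t#}"
proof -
  let ?h = "\<lambda>w :: forest \<times> forest \<times> tree. (fst w, fst (snd w), {#snd (snd w)#})"
  have "coprod_left_terms {#t#} =
      add_mset ({#t#}, {#}, {#}) (image_mset (\<lambda>x. (fst x, {#snd x#}, {#})) (cuts t)) +
      image_mset ?h (\<Sum>x\<in>#cuts t. image_mset (\<lambda>y. (fst y, snd y, snd x)) (coprod_terms (fst x)))"
    by (simp add: coprod_left_terms_def sum_mset_tree_coprod_terms coprod_on_left_def
        image_tree_coprod_terms image_sum_mset multiset.map_comp o_def)
  also have "\<dots> = add_mset ({#t#}, {#}, {#}) (image_mset (\<lambda>x. (fst x, {#snd x#}, {#})) (cuts t)) +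
      (\<Sum>x\<in>#cuts t. image_mset (\<lambda>z. (fst x, fst z, {#snd z#})) (cuts (snd x)))"
    by (subst assms) (simp add: image_sum_mset multiset.map_comp o_def)
  also have "\<dots> = coprod_right_terms {#t#}"
    by (simp add: coprod_right_terms_def sum_mset_tree_coprod_terms coprod_on_right_def
        image_tree_coprod_terms zero_prod_def sum_mset_add_mset_distrib)
  finally show ?thesis .
qed

lemma coprod_coassoc_tree: "coprod_left_terms {#t#} = coprod_right_terms {#t#}"
proof (induction t)
  case (Node M)
  then have "coprod_left_terms M = coprod_right_terms M"
    by (rule coprod_coassoc_from_trees) auto
  then show ?case
    by (rule coprod_coassoc_singleton[OF cuts_coassoc_Node])
qed

lemma cuts_coassoc:
  "(\<Sum>x\<in>#cuts t. image_mset (\<lambda>y. (fst y, snd y, snd x)) (coprod_terms (fst x))) =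
    (\<Sum>x\<in>#cuts t. image_mset (\<lambda>z. (fst x, fst z, snd z)) (cuts (snd x)))"
proof (cases t)
  case (Node M)
  show ?thesis
    unfolding Node by (rule cuts_coassoc_Node[OF coprod_coassoc_from_trees[OF coprod_coassoc_tree]])
qed

section \<open>Grafting and the coproduct\<close>

lemma fst_graft_aux [simp]: "fst (graft_aux M t) = t"
  by (cases t) simp

lemma graft_Node: "graft M (Node C) = add_mset (Node (C + M)) (image_mset Node (graftF M C))"
proof -
  have "graft M (Node C) = add_mset (Node (C + M))
      (\<Sum>c\<in>#C. image_mset (\<lambda>c'. Node (C - {#c#} + {#c'#})) (snd (graft_aux M c)))"
    unfolding graft_def by (simp add: multiset.map_comp o_def case_prod_beta)
  then show ?thesis
    by (simp add: graftF_def graft_def image_sum_mset multiset.map_comp o_def)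
qed

lemma graftF_empty [simp]: "graftF M {#} = {#}"
  by (simp add: graftF_def)

lemma graftF_single: "graftF M {#t#} = image_mset (\<lambda>t'. {#t'#}) (graft M t)"
  by (simp add: graftF_def)

lemma graftF_union:
  "graftF M (N + N') = image_mset (\<lambda>F. F + N') (graftF M N) + image_mset (\<lambda>F. N + F) (graftF M N')"
proof -
  have "(\<Sum>t\<in>#N. image_mset (\<lambda>t'. N + N' - {#t#} + {#t'#}) (graft M t)) =
      (\<Sum>t\<in>#N. image_mset (\<lambda>F. F + N') (image_mset (\<lambda>t'. N - {#t#} + {#t'#}) (graft M t)))"
    by (intro arg_cong[where f=sum_mset] image_mset_cong) (simp add: multiset.map_comp o_def diff_single_add_left)
  moreover have "(\<Sum>t\<in>#N'. image_mset (\<lambda>t'. N + N' - {#t#} + {#t'#}) (graft M t)) =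
      (\<Sum>t\<in>#N'. image_mset (\<lambda>F. N + F) (image_mset (\<lambda>t'. N' - {#t#} + {#t'#}) (graft M t)))"
    by (intro arg_cong[where f=sum_mset] image_mset_cong) (simp add: multiset.map_comp o_def diff_single_add_right)
  ultimately show ?thesis
    by (simp only: graftF_def image_sum_mset image_mset_union sum_mset.union)
qed

lemma sum_mset_replicate_weight:
  "(\<Sum>t\<in>#X. replicate_mset (weight t) Y) = replicate_mset (fweight X) Y"
  by (induction X) (simp_all add: replicate_mset_add)

lemma graftF_empty_left: "graftF {#} N = replicate_mset (fweight N) N"
proof -
  have graft_empty: "graft {#} t = replicate_mset (weight t) t" for t
  proof (induction t)
    case (Node C)
    have "graftF {#} C = (\<Sum>t\<in>#C. replicate_mset (weight t) C)"
      unfolding graftF_def using Node.IH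
      by (intro arg_cong[where f=sum_mset] image_mset_cong) simp
    also have "\<dots> = replicate_mset (fweight C) C"
      by (rule sum_mset_replicate_weight)
    finally show ?case
      by (simp add: graft_Node weight_Node del: weight.simps)
  qed
  have "graftF {#} N = (\<Sum>t\<in>#N. replicate_mset (weight t) N)"
    unfolding graftF_def
    by (intro arg_cong[where f=sum_mset] image_mset_cong) (simp add: graft_empty)
  also have "\<dots> = replicate_mset (fweight N) N"
    by (rule sum_mset_replicate_weight)
  finally show ?thesis .
qed

text \<open>Let \<open>a \<otimes> b\<close> be the term of \<open>\<Delta> N\<close> given by a cut of \<open>N\<close>.  Grafting \<open>M\<close> on a vertex of
  the pruned part \<open>a\<close> keeps the cut; grafting it on a vertex of the trunk \<open>b\<close>, the cuts of the
  new forest extending the given one also cut \<open>M\<close>, along a term \<open>m' \<otimes> m''\<close> of \<open>\<Delta> M\<close>.\<close>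

definition graft_split :: "forest \<Rightarrow> forest \<times> forest \<Rightarrow> (forest \<times> forest) multiset" where
  "graft_split M x = image_mset (\<lambda>F. (F, snd x)) (graftF M (fst x)) +
     (\<Sum>y\<in>#coprod_terms M. image_mset (\<lambda>F. (fst x + fst y, F)) (graftF (snd y) (snd x)))"

definition graft_split_cut :: "forest \<Rightarrow> forest \<times> tree \<Rightarrow> (forest \<times> tree) multiset" where
  "graft_split_cut M z = image_mset (\<lambda>F. (F, snd z)) (graftF M (fst z)) +
     (\<Sum>y\<in>#coprod_terms M. image_mset (\<lambda>t'. (fst z + fst y, t')) (graft (snd y) (snd z)))"

lemma graft_split_add:
  "graft_split M (x + x') = mset_conv (graft_split M x) {#x'#} + mset_conv {#x#} (graft_split M x')"
proof -
  obtain p s p' s' where x: "x = (p, s)" and x': "x' = (p', s')"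
    by fastforce
  have A: "image_mset (\<lambda>F. (F, s + s')) (graftF M (p + p')) =
     mset_conv (image_mset (\<lambda>F. (F, s)) (graftF M p)) {#(p', s')#} +
     mset_conv {#(p, s)#} (image_mset (\<lambda>F. (F, s')) (graftF M p'))"
    by (simp add: graftF_union mset_conv_single_right mset_conv_single_left multiset.map_comp o_def
        plus_prod_def)
  have B: "(\<Sum>y\<in>#coprod_terms M. image_mset (\<lambda>F. (p + p' + fst y, F)) (graftF (snd y) (s + s'))) =
     mset_conv (\<Sum>y\<in>#coprod_terms M. image_mset (\<lambda>F. (p + fst y, F)) (graftF (snd y) s)) {#(p', s')#} +
     mset_conv {#(p, s)#} (\<Sum>y\<in>#coprod_terms M. image_mset (\<lambda>F. (p' + fst y, F)) (graftF (snd y) s'))"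
    by (simp add: graftF_union mset_conv_sum_left mset_conv_sum_right mset_conv_single_right
        mset_conv_single_left multiset.map_comp o_def plus_prod_def sum_mset.distrib add_ac image_sum_mset)
  show ?thesis
    unfolding graft_split_def x x' plus_prod_def fst_conv snd_conv A B
    by (simp only: mset_conv_union_left mset_conv_union_right add_ac)
qed

definition coprod_graft_law :: "forest \<Rightarrow> forest \<Rightarrow> bool" where
  "coprod_graft_law M N \<longleftrightarrow>
     (\<Sum>F\<in>#graftF M N. coprod_terms F) = (\<Sum>x\<in>#coprod_terms N. graft_split M x)"

definition cuts_graft_law :: "forest \<Rightarrow> tree \<Rightarrow> bool" where
  "cuts_graft_law M t \<longleftrightarrow> (\<Sum>t'\<in>#graft M t. cuts t') = (\<Sum>z\<in>#cuts t. graft_split_cut M z)"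

lemma coprod_graft_law_union:
  assumes "coprod_graft_law M N" "coprod_graft_law M N'"
  shows "coprod_graft_law M (N + N')"
proof -
  have "(\<Sum>F\<in>#graftF M (N + N'). coprod_terms F) =
      mset_conv (\<Sum>F\<in>#graftF M N. coprod_terms F) (coprod_terms N') +
      mset_conv (coprod_terms N) (\<Sum>F\<in>#graftF M N'. coprod_terms F)"
    by (simp add: graftF_union multiset.map_comp o_def coprod_terms_union mset_conv_sum_left
        mset_conv_sum_right)
  also have "\<dots> = mset_conv (\<Sum>x\<in>#coprod_terms N. graft_split M x) (coprod_terms N') +
      mset_conv (coprod_terms N) (\<Sum>x\<in>#coprod_terms N'. graft_split M x)"
    using assms by (simp add: coprod_graft_law_def)
  also have "\<dots> = (\<Sum>x\<in>#coprod_terms (N + N'). graft_split M x)"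
    unfolding coprod_terms_union
    by (rule sum_mset_over_conv_derivation[symmetric]) (rule graft_split_add)
  finally show ?thesis
    by (simp add: coprod_graft_law_def)
qed

lemma coprod_graft_law_singleton:
  assumes "cuts_graft_law M t"
  shows "coprod_graft_law M {#t#}"
proof -
  let ?w = "\<lambda>w :: forest \<times> tree. (fst w, {#snd w#})"
  have split: "image_mset ?w (graft_split_cut M z) = graft_split M (fst z, {#snd z#})" for z
    by (simp add: graft_split_cut_def graft_split_def graftF_single image_sum_mset multiset.map_comp o_def)
  have "(\<Sum>F\<in>#graftF M {#t#}. coprod_terms F) = (\<Sum>t'\<in>#graft M t. tree_coprod_terms t')"
    by (simp add: graftF_single multiset.map_comp o_def)
  also have "\<dots> = image_mset (\<lambda>t'. ({#t'#}, {#})) (graft M t) +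
      image_mset ?w (\<Sum>t'\<in>#graft M t. cuts t')"
    by (simp add: tree_coprod_terms_eq image_sum_mset sum_mset_add_mset_distrib multiset.map_comp o_def)
  also have "\<dots> = image_mset (\<lambda>t'. ({#t'#}, {#})) (graft M t) +
      (\<Sum>z\<in>#cuts t. graft_split M (fst z, {#snd z#}))"
    using assms by (simp add: cuts_graft_law_def image_sum_mset split)
  also have "\<dots> = (\<Sum>x\<in>#coprod_terms {#t#}. graft_split M x)"
    by (simp add: sum_mset_tree_coprod_terms graft_split_def graftF_single multiset.map_comp o_def)
  finally show ?thesis
    by (simp add: coprod_graft_law_def)
qed

lemma coprod_graft_law_from_trees:
  "(\<And>t. t \<in># N \<Longrightarrow> cuts_graft_law M t) \<Longrightarrow> coprod_graft_law M N"
proof (induction N)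
  case empty
  show ?case
    by (simp add: coprod_graft_law_def graft_split_def zero_prod_def)
next
  case (add t N)
  then show ?case
    using coprod_graft_law_union[OF coprod_graft_law_singleton[of M t], of N] by simp
qed

lemma cuts_graft_law_Node:
  assumes "coprod_graft_law M C"
  shows "cuts_graft_law M (Node C)"
proof -
  let ?nd = "\<lambda>w :: forest \<times> forest. (fst w, Node (snd w))"
  have "(\<Sum>t'\<in>#graft M (Node C). cuts t') =
      image_mset ?nd (mset_conv (coprod_terms C) (coprod_terms M)) +
      image_mset ?nd (\<Sum>F\<in>#graftF M C. coprod_terms F)"
    by (simp add: graft_Node cuts_Node' coprod_terms_union image_sum_mset multiset.map_comp o_def)
  also have "\<dots> = image_mset ?nd (mset_conv (coprod_terms C) (coprod_terms M)) +
      image_mset ?nd (\<Sum>x\<in>#coprod_terms C. graft_split M x)"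
    using assms by (simp add: coprod_graft_law_def)
  also have "\<dots> = (\<Sum>x\<in>#coprod_terms C. graft_split_cut M (fst x, Node (snd x)))"
    by (simp add: mset_conv_def image_sum_mset multiset.map_comp o_def graft_split_def
        graft_split_cut_def graft_Node sum_mset.distrib sum_mset_add_mset_distrib plus_prod_def add_ac)
  also have "\<dots> = (\<Sum>z\<in>#cuts (Node C). graft_split_cut M z)"
    by (simp add: cuts_Node' multiset.map_comp o_def)
  finally show ?thesis
    by (simp add: cuts_graft_law_def)
qed

lemma coprod_terms_graftF:
  "(\<Sum>F\<in>#graftF M N. coprod_terms F) = (\<Sum>x\<in>#coprod_terms N. graft_split M x)"
proof -
  have "cuts_graft_law M t" for t
  proof (induction t)
    case (Node C)
    then show ?case
      by (rule cuts_graft_law_Node[OF coprod_graft_law_from_trees])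
  qed
  then show ?thesis
    using coprod_graft_law_from_trees[of N M] by (simp add: coprod_graft_law_def)
qed

section \<open>The coproduct of \<open>x \<top> q\<close> for primitive \<open>q\<close>\<close>

lemma one_eq_mono: "(1 :: H) = mono {#}"
  by (simp add: mono_def)

lemma mono_add: "mono (F + G) = mono F * mono G"
  by (simp add: mono_def mult_single)

lemma DeltaT_eq_pm_of_mset: "DeltaT t = pm_of_mset (tree_coprod_terms t)"
proof -
  have "pm_of_mset (tree_coprod_terms t) =
      Poly_Mapping.single ({#t#}, {#}) 1 + Poly_Mapping.single ({#}, {#t#}) 1 +
      pm_of_mset (image_mset (\<lambda>w. (fst w, {#snd w#})) (ncuts t))"
    by (simp add: tree_coprod_terms_eq cuts_ncuts[of t])
  then show ?thesis
    by (simp add: DeltaT_def pm_of_mset_image case_prod_beta' add_ac)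
qed

lemma Delta_eq_lext: "Delta x = lext (\<lambda>F. pm_of_mset (coprod_terms F)) x"
proof -
  have "pm_of_mset (coprod_terms F) = prod_mset (image_mset DeltaT F)" for F
    by (induction F) (simp_all add: coprod_terms_add_mset pm_of_mset_conv DeltaT_eq_pm_of_mset)
  then show ?thesis
    by (simp add: Delta_def)
qed

lemma Delta_mono: "Delta (mono F) = pm_of_mset (coprod_terms F)"
  by (simp add: Delta_eq_lext mono_def)

lemma Delta_lext: "Delta (lext f x) = lext (\<lambda>F. Delta (f F)) x"
  unfolding Delta_eq_lext by (rule lext_lext)

lemma Delta_diff: "Delta (x - y) = Delta x - Delta y"
  by (simp add: Delta_eq_lext lext_diff)

lemma Delta_sum_mset: "Delta (\<Sum>i\<in>#X. f i) = (\<Sum>i\<in>#X. Delta (f i))"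
  by (simp add: Delta_eq_lext lext_sum_mset)

lemma Delta_scal: "Delta (scal c x) = scal c (Delta x)"
  by (simp add: Delta_eq_lext lext_scal)

lemma Delta_pm_of_mset: "Delta (pm_of_mset X) = (\<Sum>F\<in>#X. pm_of_mset (coprod_terms F))"
  by (simp add: Delta_eq_lext lext_pm_of_mset)

lemma top_eq_lext: "top x y = lext (\<lambda>M. lext (\<lambda>N. topF M N) y) x"
  by (simp add: top_def lext_def scal_sum)

lemma topF_eq_pm_of_mset: "topF M N = scal (1 / of_nat (fweight N)) (pm_of_mset (graftF M N))"
  by (simp add: topF_def pm_of_mset_def mono_def[abs_def])

lemma top_mono_left: "top (mono M) q = lext (topF M) q"
  by (simp add: top_eq_lext mono_def)

lemma top_one_left:
  assumes "Poly_Mapping.lookup y {#} = 0"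
  shows "top 1 y = y"
proof -
  have "top 1 y = lext (topF {#}) y"
    by (simp add: one_eq_mono top_mono_left)
  also have "\<dots> = lext (\<lambda>N. Poly_Mapping.single N 1) y"
  proof (rule lext_cong)
    fix N
    assume "N \<in> Poly_Mapping.keys y"
    then have "N \<noteq> {#}"
      using assms by (auto simp: in_keys_iff)
    then show "topF {#} N = Poly_Mapping.single N 1"
      by (simp add: topF_eq_pm_of_mset graftF_empty_left pm_of_mset_replicate)
  qed
  also have "\<dots> = y"
    by (rule lext_single_basis)
  finally show ?thesis .
qed

lemma lookup_top_empty: "Poly_Mapping.lookup (top x y) {#} = 0"
proof -
  have "{#} \<notin># graftF M N" for M N
    by (auto simp: graftF_def)
  then have "Poly_Mapping.lookup (topF M N) {#} = 0" for M N
    by (simp add: topF_eq_pm_of_mset lookup_pm_of_mset count_eq_zero_iff)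
  then show ?thesis
    by (simp add: top_eq_lext lookup_lext)
qed

text \<open>Every term of \<open>\<Delta> N\<close> has total weight \<open>|N|\<close>, so normalising by the weight of the
  term makes this map send \<open>\<Delta> N\<close> to \<open>\<Delta> (M \<top> N)\<close>.\<close>

definition graft_on_terms :: "forest \<Rightarrow> H2 \<Rightarrow> H2" where
  "graft_on_terms M z = lext (\<lambda>w. scal (1 / of_nat (fweight (fst w) + fweight (snd w)))
     (pm_of_mset (graft_split M w))) z"

lemma graft_on_terms_coprod:
  "graft_on_terms M (pm_of_mset (coprod_terms N)) = Delta (topF M N)"
proof -
  have "graft_on_terms M (pm_of_mset (coprod_terms N)) =
      (\<Sum>w\<in>#coprod_terms N. scal (1 / of_nat (fweight N)) (pm_of_mset (graft_split M w)))"
    unfolding graft_on_terms_def lext_pm_of_mset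
    by (intro arg_cong[where f=sum_mset] image_mset_cong) (auto simp: coprod_terms_weight)
  also have "\<dots> = scal (1 / of_nat (fweight N)) (pm_of_mset (\<Sum>w\<in>#coprod_terms N. graft_split M w))"
    by (simp add: scal_sum_mset pm_of_mset_sum_mset)
  also have "\<dots> = Delta (topF M N)"
    by (simp add: coprod_terms_graftF[symmetric] topF_eq_pm_of_mset Delta_scal Delta_pm_of_mset
        pm_of_mset_sum_mset)
  finally show ?thesis .
qed

lemma graft_on_terms_tens_one: "graft_on_terms M (tens q 1) = lext (\<lambda>N. tens (topF M N) 1) q"
proof -
  have "graft_on_terms M (tens q 1) = lext (\<lambda>F. graft_on_terms M (Poly_Mapping.single (F, {#}) 1)) q"
    by (simp only: graft_on_terms_def lext_tens one_eq_mono mono_def lext_single scal_1)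
  then show ?thesis
    by (simp add: graft_on_terms_def graft_split_def topF_eq_pm_of_mset tens_scal_left one_eq_mono
        tens_pm_of_mset_mono)
qed

lemma graft_on_terms_one_tens:
  "graft_on_terms M (tens 1 q) =
     lext (\<lambda>N. \<Sum>y\<in>#coprod_terms M. tens (mono (fst y)) (topF (snd y) N)) q"
proof -
  have "graft_on_terms M (tens 1 q) = lext (\<lambda>G. graft_on_terms M (Poly_Mapping.single ({#}, G) 1)) q"
    by (simp only: graft_on_terms_def lext_tens one_eq_mono mono_def lext_single scal_1)
  then show ?thesis
    by (simp add: graft_on_terms_def graft_split_def topF_eq_pm_of_mset tens_scal_right
        tens_mono_pm_of_mset pm_of_mset_sum_mset scal_sum_mset)
qed

lemma Delta_top:
  assumes "primitive q"
  shows "Delta (top x q) =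
    tens (top x q) 1 + lext (\<lambda>w. tens (mono (fst w)) (top (mono (snd w)) q)) (Delta x)"
proof -
  have "Delta (top x q) = lext (\<lambda>M. lext (\<lambda>N. Delta (topF M N)) q) x"
    by (simp add: top_eq_lext Delta_lext)
  also have "\<dots> = lext (\<lambda>M. graft_on_terms M (Delta q)) x"
  proof -
    have "graft_on_terms M (Delta q) = lext (\<lambda>N. Delta (topF M N)) q" for M
      by (simp only: Delta_eq_lext[of q] graft_on_terms_def lext_lext
          graft_on_terms_coprod[unfolded graft_on_terms_def])
    then show ?thesis
      by simp
  qed
  also have "\<dots> = lext (\<lambda>M. graft_on_terms M (tens q 1) + graft_on_terms M (tens 1 q)) x"
    using assms by (simp only: primitive_def graft_on_terms_def lext_add)
  also have "\<dots> = tens (top x q) 1 + lext (\<lambda>w. tens (mono (fst w)) (top (mono (snd w)) q)) (Delta x)"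
    by (simp add: graft_on_terms_tens_one graft_on_terms_one_tens lext_add_fun top_eq_lext
        tens_lext_left Delta_eq_lext lext_lext lext_pm_of_mset lext_sum_mset_fun tens_lext_right
        top_mono_left[unfolded top_eq_lext])
  finally show ?thesis .
qed

section \<open>Bialgebra endomorphisms\<close>

lemma bialg_endo_linear: "bialg_endo \<Psi> \<Longrightarrow> linear_map \<Psi>"
  by (simp add: bialg_endo_def linear_map_def)

lemma bialg_endo_one: "bialg_endo \<Psi> \<Longrightarrow> \<Psi> (mono {#}) = 1"
  by (simp add: bialg_endo_def one_eq_mono[symmetric])

lemma bialg_endo_mono:
  "bialg_endo \<Psi> \<Longrightarrow> \<Psi> (mono F) = prod_mset (image_mset (\<lambda>t. \<Psi> (treeH t)) F)"
proof (induction F)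
  case empty
  then show ?case by (simp add: bialg_endo_one)
next
  case (add t F)
  have "mono (add_mset t F) = treeH t * mono F"
    by (simp add: treeH_def mono_add[symmetric])
  then show ?case
    using add by (simp add: bialg_endo_def)
qed

lemma Delta_bialg_endo_mono:
  assumes "bialg_endo \<Psi>"
  shows "Delta (\<Psi> (mono F)) = (\<Sum>w\<in>#coprod_terms F. tens (\<Psi> (mono (fst w))) (\<Psi> (mono (snd w))))"
  using assms by (simp add: bialg_endo_def Delta_mono tmap_def lext_pm_of_mset case_prod_beta')

lemma Delta_bialg_endo_tree:
  assumes "bialg_endo \<Psi>"
  shows "Delta (\<Psi> (treeH T)) =
    tens (\<Psi> (treeH T)) 1 + (\<Sum>x\<in>#cuts T. tens (\<Psi> (mono (fst x))) (\<Psi> (treeH (snd x))))"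
  using Delta_bialg_endo_mono[OF assms, of "{#T#}"]
  by (simp add: sum_mset_tree_coprod_terms bialg_endo_one[OF assms] treeH_def)

lemma lext_tens_top:
  "lext (\<lambda>v. tens (mono (fst v)) (top (mono (snd v)) q)) (tens a b) = tens a (top b q)"
proof -
  have "lext (\<lambda>v. tens (mono (fst v)) (top (mono (snd v)) q)) (tens a b) =
      lext (\<lambda>F. lext (\<lambda>G. tens (mono F) (top (mono G) q)) b) a"
    by (simp add: lext_tens)
  also have "\<dots> = lext (\<lambda>F. tens (mono F) (top b q)) a"
    by (simp only: tens_lext_right[symmetric] top_mono_left) (simp add: top_eq_lext)
  also have "\<dots> = tens a (top b q)"
    by (simp only: tens_lext_left[symmetric]) (simp add: mono_def[abs_def] lext_single_basis)
  finally show ?thesis .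
qed

lemma Delta_top_bialg_endo:
  assumes "bialg_endo \<Psi>" "primitive q"
  shows "Delta (top (\<Psi> (mono p)) q) = tens (top (\<Psi> (mono p)) q) 1 +
     (\<Sum>y\<in>#coprod_terms p. tens (\<Psi> (mono (fst y))) (top (\<Psi> (mono (snd y))) q))"
  using Delta_top[OF assms(2), of "\<Psi> (mono p)"]
  by (simp add: Delta_bialg_endo_mono[OF assms(1)] lext_sum_mset lext_tens_top)

section \<open>Recovering the primitive elements from \<open>\<Psi>\<close>\<close>

lemma phiT_unfold:
  "phiT P T = (\<Sum>w\<in>#ncuts T. top (prod_mset (image_mset (phiT P) (fst w))) (P (snd w))) + P T"
proof -
  have "phiT P T = (\<Sum>w\<in>#ncuts T. case w of (p, r) \<Rightarrow>
      top (prod_mset (image_mset (cut (phiT P) (measure weight) T) p)) (P r)) + P T"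
    unfolding phiT_def by (subst wfrec) simp_all
  also have "(\<Sum>w\<in>#ncuts T. case w of (p, r) \<Rightarrow>
        top (prod_mset (image_mset (cut (phiT P) (measure weight) T) p)) (P r)) =
      (\<Sum>w\<in>#ncuts T. top (prod_mset (image_mset (phiT P) (fst w))) (P (snd w)))"
  proof (intro arg_cong[where f=sum_mset] image_mset_cong)
    fix w
    assume w: "w \<in># ncuts T"
    obtain p r where wpr: "w = (p, r)"
      by fastforce
    have "image_mset (cut (phiT P) (measure weight) T) p = image_mset (phiT P) p"
      using ncuts_weight(2)[of p r T] w wpr by (intro image_mset_cong) (simp add: cut_apply)
    then show "(case w of (p, r) \<Rightarrow> top (prod_mset (image_mset (cut (phiT P) (measure weight) T) p)) (P r)) =
        top (prod_mset (image_mset (phiT P) (fst w))) (P (snd w))"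
      by (simp add: wpr)
  qed
  finally show ?thesis .
qed

lemma Phi_treeH: "Phi P (treeH T) = phiT P T"
  by (simp add: Phi_def treeH_def mono_def)

definition prim_family :: "(H \<Rightarrow> H) \<Rightarrow> tree \<Rightarrow> H" where
  "prim_family \<Psi> = wfrec (measure weight)
     (\<lambda>rec T. \<Psi> (treeH T) - (\<Sum>w\<in>#ncuts T. top (\<Psi> (mono (fst w))) (rec (snd w))))"

lemma prim_family_unfold:
  "prim_family \<Psi> T = \<Psi> (treeH T) - (\<Sum>w\<in>#ncuts T. top (\<Psi> (mono (fst w))) (prim_family \<Psi> (snd w)))"
proof -
  have "prim_family \<Psi> T = \<Psi> (treeH T) -
      (\<Sum>w\<in>#ncuts T. top (\<Psi> (mono (fst w))) (cut (prim_family \<Psi>) (measure weight) T (snd w)))"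
    unfolding prim_family_def by (subst wfrec) simp_all
  also have "(\<Sum>w\<in>#ncuts T. top (\<Psi> (mono (fst w))) (cut (prim_family \<Psi>) (measure weight) T (snd w))) =
      (\<Sum>w\<in>#ncuts T. top (\<Psi> (mono (fst w))) (prim_family \<Psi> (snd w)))"
    using ncuts_weight(1) by (intro arg_cong[where f=sum_mset] image_mset_cong) (force simp: cut_apply)
  finally show ?thesis .
qed

lemma lookup_prim_family_empty:
  assumes "bialg_endo \<Psi>"
  shows "Poly_Mapping.lookup (prim_family \<Psi> T) {#} = 0"
proof -
  have "Poly_Mapping.lookup (\<Psi> (treeH T)) {#} = 0"
    using assms by (simp add: bialg_endo_def eps_def treeH_def mono_def lookup_single)
  then show ?thesis
    by (subst prim_family_unfold) (simp add: lookup_minus lookup_sum_mset lookup_top_empty)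
qed

lemma bialg_endo_tree_eq_sum_cuts:
  assumes "bialg_endo \<Psi>"
  shows "\<Psi> (treeH T) = (\<Sum>z\<in>#cuts T. top (\<Psi> (mono (fst z))) (prim_family \<Psi> (snd z)))"
proof -
  have "top (\<Psi> (mono {#})) (prim_family \<Psi> T) = prim_family \<Psi> T"
    using assms by (simp add: bialg_endo_one top_one_left lookup_prim_family_empty)
  then show ?thesis
    by (simp add: cuts_ncuts[of T] prim_family_unfold[of \<Psi> T])
qed

lemma Delta_sum_ncuts_top:
  assumes "bialg_endo \<Psi>" and "\<And>w. w \<in># ncuts T \<Longrightarrow> primitive (P (snd w))"
  shows "Delta (\<Sum>w\<in>#ncuts T. top (\<Psi> (mono (fst w))) (P (snd w))) =
    tens (\<Sum>w\<in>#ncuts T. top (\<Psi> (mono (fst w))) (P (snd w))) 1 +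
    (\<Sum>w\<in>#ncuts T. \<Sum>y\<in>#coprod_terms (fst w).
       tens (\<Psi> (mono (fst y))) (top (\<Psi> (mono (snd y))) (P (snd w))))"
proof -
  have "Delta (\<Sum>w\<in>#ncuts T. top (\<Psi> (mono (fst w))) (P (snd w))) =
    (\<Sum>w\<in>#ncuts T. tens (top (\<Psi> (mono (fst w))) (P (snd w))) 1 +
      (\<Sum>y\<in>#coprod_terms (fst w). tens (\<Psi> (mono (fst y))) (top (\<Psi> (mono (snd y))) (P (snd w)))))"
    unfolding Delta_sum_mset using Delta_top_bialg_endo[OF assms(1) assms(2)]
    by (intro arg_cong[where f=sum_mset] image_mset_cong) auto
  then show ?thesis
    by (simp add: sum_mset.distrib tens_sum_mset_left)
qed

text \<open>Coassociativity of cuts, read through \<open>\<Psi>(t) = \<Sum>\<^sub>C \<Psi>(P\<^sup>C t) \<top> P\<^bsub>R\<^sup>C t\<^esub>\<close>.\<close>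

lemma sum_cuts_tens_bialg_endo:
  assumes "bialg_endo \<Psi>"
  shows "(\<Sum>x\<in>#cuts T. tens (\<Psi> (mono (fst x))) (\<Psi> (treeH (snd x)))) =
    tens 1 (prim_family \<Psi> T) +
    (\<Sum>w\<in>#ncuts T. \<Sum>y\<in>#coprod_terms (fst w).
       tens (\<Psi> (mono (fst y))) (top (\<Psi> (mono (snd y))) (prim_family \<Psi> (snd w))))"
proof -
  define f where "f u = tens (\<Psi> (mono (fst u)))
    (top (\<Psi> (mono (fst (snd u)))) (prim_family \<Psi> (snd (snd u))))" for u :: "forest \<times> forest \<times> tree"
  have "(\<Sum>x\<in>#cuts T. tens (\<Psi> (mono (fst x))) (\<Psi> (treeH (snd x)))) =
      (\<Sum>u\<in>#(\<Sum>x\<in>#cuts T. image_mset (\<lambda>z. (fst x, fst z, snd z)) (cuts (snd x))). f u)"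
    by (simp add: sum_mset_sum_mset multiset.map_comp o_def f_def tens_sum_mset_right
        bialg_endo_tree_eq_sum_cuts[OF assms])
  also have "\<dots> = (\<Sum>u\<in>#(\<Sum>x\<in>#cuts T. image_mset (\<lambda>y. (fst y, snd y, snd x)) (coprod_terms (fst x))). f u)"
    by (simp only: cuts_coassoc)
  also have "\<dots> = tens 1 (prim_family \<Psi> T) +
    (\<Sum>w\<in>#ncuts T. \<Sum>y\<in>#coprod_terms (fst w).
       tens (\<Psi> (mono (fst y))) (top (\<Psi> (mono (snd y))) (prim_family \<Psi> (snd w))))"
    using assms
    by (simp add: sum_mset_sum_mset multiset.map_comp o_def cuts_ncuts[of T] f_def bialg_endo_one
        top_one_left lookup_prim_family_empty)
  finally show ?thesis .
qed

lemma prim_family_primitive: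
  assumes "bialg_endo \<Psi>"
  shows "primitive (prim_family \<Psi> T)"
proof (induction T rule: measure_induct_rule[of weight])
  case (less T)
  let ?P = "prim_family \<Psi>"
  let ?S = "\<Sum>w\<in>#ncuts T. top (\<Psi> (mono (fst w))) (?P (snd w))"
  let ?X = "\<Sum>w\<in>#ncuts T. \<Sum>y\<in>#coprod_terms (fst w). tens (\<Psi> (mono (fst y))) (top (\<Psi> (mono (snd y))) (?P (snd w)))"
  have "Delta ?S = tens ?S 1 + ?X"
    using ncuts_weight(1) less by (intro Delta_sum_ncuts_top[OF assms]) force
  moreover have "Delta (\<Psi> (treeH T)) = tens (\<Psi> (treeH T)) 1 + tens 1 (?P T) + ?X"
    by (simp add: Delta_bialg_endo_tree[OF assms] sum_cuts_tens_bialg_endo[OF assms] add.assoc)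
  ultimately have "Delta (?P T) = tens (\<Psi> (treeH T) - ?S) 1 + tens 1 (?P T)"
    by (simp add: prim_family_unfold[of \<Psi> T] Delta_diff tens_diff_left)
  then show ?case
    by (simp add: primitive_def prim_family_unfold[of \<Psi> T, symmetric])
qed

lemma phiT_prim_family:
  assumes "bialg_endo \<Psi>"
  shows "phiT (prim_family \<Psi>) T = \<Psi> (treeH T)"
proof (induction T rule: measure_induct_rule[of weight])
  case (less T)
  have "image_mset (phiT (prim_family \<Psi>)) (fst w) = image_mset (\<lambda>t. \<Psi> (treeH t)) (fst w)"
    if "w \<in># ncuts T" for w
    using that ncuts_weight(2)[of "fst w" "snd w" T] less by (intro image_mset_cong) simp
  then have "(\<Sum>w\<in>#ncuts T. top (prod_mset (image_mset (phiT (prim_family \<Psi>)) (fst w))) (prim_family \<Psi> (snd w))) =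
      (\<Sum>w\<in>#ncuts T. top (\<Psi> (mono (fst w))) (prim_family \<Psi> (snd w)))"
    by (intro arg_cong[where f=sum_mset] image_mset_cong) (simp add: bialg_endo_mono[OF assms])
  then show ?case
    by (simp add: phiT_unfold[of _ T] prim_family_unfold[of \<Psi> T])
qed

lemma Phi_prim_family:
  assumes "bialg_endo \<Psi>"
  shows "Phi (prim_family \<Psi>) = \<Psi>"
proof
  fix x
  have "phiT (prim_family \<Psi>) = (\<lambda>t. \<Psi> (treeH t))"
    using phiT_prim_family[OF assms] by (rule ext)
  then have "Phi (prim_family \<Psi>) x = lext (\<lambda>F. \<Psi> (mono F)) x"
    unfolding Phi_def by (simp add: bialg_endo_mono[OF assms])
  also have "\<dots> = \<Psi> x"
    using linear_map_eq_lext[OF bialg_endo_linear[OF assms], of x] by (simp add: mono_def[abs_def])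
  finally show "Phi (prim_family \<Psi>) x = \<Psi> x" .
qed

lemma prim_family_unique:
  assumes "bialg_endo \<Psi>" and "\<Psi> = Phi Q"
  shows "Q T = prim_family \<Psi> T"
proof (induction T rule: measure_induct_rule[of weight])
  case (less T)
  have phiT_Q: "phiT Q = (\<lambda>t. \<Psi> (treeH t))"
    using assms(2) by (simp add: Phi_treeH)
  have "Q (snd w) = prim_family \<Psi> (snd w)" if "w \<in># ncuts T" for w
    using that ncuts_weight(1)[of "fst w" "snd w" T] less by simp
  then have "(\<Sum>w\<in>#ncuts T. top (prod_mset (image_mset (phiT Q) (fst w))) (Q (snd w))) =
      (\<Sum>w\<in>#ncuts T. top (\<Psi> (mono (fst w))) (prim_family \<Psi> (snd w)))"
    by (intro arg_cong[where f=sum_mset] image_mset_cong) (simp add: bialg_endo_mono[OF assms(1)] phiT_Q)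
  then have "\<Psi> (treeH T) = (\<Sum>w\<in>#ncuts T. top (\<Psi> (mono (fst w))) (prim_family \<Psi> (snd w))) + Q T"
    using phiT_unfold[of Q T] by (simp add: phiT_Q)
  then show ?case
    by (simp add: prim_family_unfold[of \<Psi> T] algebra_simps)
qed

theorem theorem10p2:
  fixes \<Psi> :: "H \<Rightarrow> H"
  assumes "bialg_endo \<Psi>"
  shows "\<exists>!P :: tree \<Rightarrow> H. (\<forall>t. primitive (P t)) \<and> \<Psi> = Phi P"
proof (rule ex1I[of _ "prim_family \<Psi>"])
  show "(\<forall>t. primitive (prim_family \<Psi> t)) \<and> \<Psi> = Phi (prim_family \<Psi>)"
    using prim_family_primitive[OF assms] Phi_prim_family[OF assms] by simp
next
  fix Q
  assume "(\<forall>t. primitive (Q t)) \<and> \<Psi> = Phi Q"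
  then show "Q = prim_family \<Psi>"
    using prim_family_unique[OF assms] by blast
qed

end
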